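(* Let $d\ge1$ and let $f:\mathbb{R}^d\to\mathbb{R}$ be a separately convex function. Then $$D^+_vf(x)\ge -D^+_{-v}f(x)$$ for every direction $v\in S^{d-1}$ and every $x\in\mathbb{R}^d$.
   Context: A function $f:\mathbb{R}^d\to\mathbb{R}$ is called separately convex if it is convex on every line parallel to a coordinate axis. For $v\in S^{d-1}$ (the unit sphere of $\mathbb{R}^d$), $D^+_vf(x)=\limsup_{t\to0+}\frac{f(x+tv)-f(x)}{t}$ denotes the upper one-sided derivative of $f$ at $x$ in direction $v$. *)

theory Defs
  imports "HOL-Analysis.Analysis" "HOL-Library.Extended_Real"
begin

definition separately_convex :: "(real^'n \<Rightarrow> real) \<Rightarrow> bool" where
  "separately_convex f \<longleftrightarrow>
     (\<forall>x i. convex_on UNIV (\<lambda>t::real. f (x + t *\<^sub>R axis i 1)))"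

definition upper_dir_deriv :: "(real^'n \<Rightarrow> real) \<Rightarrow> real^'n \<Rightarrow> real^'n \<Rightarrow> ereal" where
  "upper_dir_deriv f x v =
     Limsup (at_right 0) (\<lambda>t::real. ereal ((f (x + t *\<^sub>R v) - f x) / t))"

end

theory Submission
  imports Defs
begin

text \<open>
  If the inequality failed, \<open>f\<close> would have a concave kink at \<open>x\<close> in direction \<open>v\<close>:
  \<open>f (x + h v) + f (x - h v) - 2 f x \<le> -2\<gamma>h\<close> for all small \<open>h > 0\<close>.
  Separately convex functions are bounded on cubes, hence locally Lipschitz.
  A concave kink along \<open>w\<close> that persists over a long range of scales \<open>[\<rho>\<^sub>1, \<rho>\<^sub>2]\<close> can be
  moved a distance \<open>X\<close> along a coordinate axis \<open>e\<^sub>i\<close>, where convexity on the lines parallel to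
  \<open>e\<^sub>i\<close> turns it into a kink of half the strength along \<open>w - w\<^sub>i e\<^sub>i\<close>, over a shorter range of
  scales. For this the slopes of \<open>f\<close> along \<open>e\<^sub>i\<close> at the scales \<open>X\<close> and \<open>B X\<close> must nearly agree;
  since these slopes are bounded by the Lipschitz constant, a pigeonhole argument over
  geometric scales provides such an \<open>X\<close>. After at most \<open>d\<close> such steps the direction is \<open>0\<close>,
  along which there is no concave kink.
\<close>

section \<open>Convex functions of one variable\<close>

lemma convex_on_three_points:
  fixes \<phi> :: "real \<Rightarrow> real"
  assumes "convex_on {a..b} \<phi>" and "a < b" and "c \<in> {a..b}"
  shows "(b - a) * \<phi> c \<le> (b - c) * \<phi> a + (c - a) * \<phi> b"
proof -
  have "\<phi> c \<le> (\<phi> b - \<phi> a) / (b - a) * (c - a) + \<phi> a"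
    using convex_onD_Icc'[OF assms(1,3)] by simp
  then have "(b - a) * \<phi> c \<le> (b - a) * ((\<phi> b - \<phi> a) / (b - a) * (c - a) + \<phi> a)"
    using assms(2) by (intro mult_left_mono) auto
  also have "\<dots> = (b - c) * \<phi> a + (c - a) * \<phi> b"
    using assms(2) by (simp add: field_simps)
  finally show ?thesis .
qed

lemma convex_on_slope_mono:
  fixes \<phi> :: "real \<Rightarrow> real"
  assumes "convex_on I \<phi>" and "x \<in> I" "z \<in> I" and "x < y" "y < z"
  shows "(\<phi> y - \<phi> x) / (y - x) \<le> (\<phi> z - \<phi> y) / (z - y)"
  using convex_on_slope_le[OF assms] by (smt (verit) minus_divide_divide)

lemma convex_on_Icc_lipschitz_bound:
  fixes \<phi> :: "real \<Rightarrow> real"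
  assumes cvx: "convex_on {a - r..b + r} \<phi>" and r: "r > 0"
    and bounds: "\<And>t. t \<in> {a - r..b + r} \<Longrightarrow> D \<le> \<phi> t \<and> \<phi> t \<le> C"
    and s: "s \<in> {a..b}" and t: "t \<in> {a..b}"
  shows "\<bar>\<phi> t - \<phi> s\<bar> \<le> (C - D) / r * \<bar>t - s\<bar>"
proof -
  have slope_bound: "\<bar>(\<phi> t - \<phi> s) / (t - s)\<bar> \<le> (C - D) / r"
    if "s < t" "s \<in> {a..b}" "t \<in> {a..b}" for s t
  proof -
    have "(\<phi> t - \<phi> s) / (t - s) \<le> (\<phi> (t + r) - \<phi> t) / (t + r - t)"
      using convex_on_slope_mono[OF cvx, of s "t + r" t] that r by auto
    also have "\<dots> \<le> (C - D) / r"
      using bounds[of "t + r"] bounds[of t] that r by (auto intro: divide_right_mono)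
    finally have up: "(\<phi> t - \<phi> s) / (t - s) \<le> (C - D) / r" .
    have "(D - C) / r \<le> (\<phi> s - \<phi> (s - r)) / (s - (s - r))"
      using bounds[of "s - r"] bounds[of s] that r by (auto intro: divide_right_mono)
    also have "\<dots> \<le> (\<phi> t - \<phi> s) / (t - s)"
      using convex_on_slope_mono[OF cvx, of "s - r" t s] that r by auto
    finally have "- ((C - D) / r) \<le> (\<phi> t - \<phi> s) / (t - s)"
      by (simp add: minus_divide_left)
    with up show ?thesis by linarith
  qed
  consider "s < t" | "s = t" | "t < s" by linarith
  then show ?thesis
  proof cases
    case 1
    then show ?thesis using slope_bound[OF 1 s t] by (simp add: abs_div divide_le_eq)
  next
    case 3
    then show ?thesis using slope_bound[OF 3 t s]
      by (simp add: abs_div divide_le_eq abs_minus_commute)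
  qed simp
qed

section \<open>Local Lipschitz continuity of separately convex functions\<close>

definition cube :: "real^'n \<Rightarrow> real \<Rightarrow> (real^'n) set" where
  "cube x s = {y. \<forall>i. \<bar>y$i - x$i\<bar> \<le> s}"

lemma mem_cube: "y \<in> cube x s \<longleftrightarrow> (\<forall>i. \<bar>y$i - x$i\<bar> \<le> s)"
  by (simp add: cube_def)

lemma separately_convexD:
  "separately_convex f \<Longrightarrow> convex_on UNIV (\<lambda>t. f (z + t *\<^sub>R axis i 1))"
  by (simp add: separately_convex_def)

lemma separately_convex_bdd_above_cube:
  fixes f :: "real^'n \<Rightarrow> real"
  assumes sc: "separately_convex f"
  shows "bdd_above (f ` cube x s)"
proof -
  define corner :: "('n \<Rightarrow> bool) \<Rightarrow> real^'n"
    where "corner b = (\<chi> i. if b i then x$i + s else x$i - s)" for b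
  define C where "C = Max (range (\<lambda>b. f (corner b)))"
  have "f y \<le> C" if "finite J" "\<forall>i\<in>J. \<bar>y$i - x$i\<bar> \<le> s"
    "\<forall>i. i \<notin> J \<longrightarrow> y$i = x$i + s \<or> y$i = x$i - s" for J y
    using that
  proof (induction J arbitrary: y rule: finite_induct)
    case empty
    then have "y = corner (\<lambda>i. y$i = x$i + s)"
      by (auto simp: corner_def vec_eq_iff)
    then show ?case
      unfolding C_def by (metis Max_ge finite finite_imageI rangeI)
  next
    case (insert j J)
    define \<psi> where "\<psi> t = f (y - y$j *\<^sub>R axis j 1 + t *\<^sub>R axis j 1)" for t
    have "convex_on {x$j - s..x$j + s} \<psi>"
      unfolding \<psi>_def by (rule convex_on_subset[OF separately_convexD[OF sc]]) auto
    then have "f y \<le> max (\<psi> (x$j - s)) (\<psi> (x$j + s))"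
      using convex_on_le_max[of "x$j - s" "x$j + s" \<psi> "y$j"] insert.prems
      by (auto simp: \<psi>_def abs_le_iff)
    moreover have "\<psi> t \<le> C" if "t = x$j - s \<or> t = x$j + s" for t
      unfolding \<psi>_def using insert that by (intro insert.IH) (auto simp: axis_def)
    ultimately show ?case by (metis max.bounded_iff order_trans)
  qed
  from this[of UNIV] show ?thesis
    by (intro bdd_aboveI2[where M = C]) (simp add: mem_cube)
qed

lemma separately_convex_bdd_below_cube:
  fixes f :: "real^'n \<Rightarrow> real"
  assumes sc: "separately_convex f"
  shows "bdd_below (f ` cube x s)"
proof -
  obtain C where C: "\<And>y. y \<in> cube x s \<Longrightarrow> f y \<le> C"
    using separately_convex_bdd_above_cube[OF sc, of x s] by (auto simp: bdd_above_def)
  have "\<exists>D. \<forall>y. (\<forall>i\<in>J. \<bar>y$i - x$i\<bar> \<le> s) \<and> (\<forall>i. i \<notin> J \<longrightarrow> y$i = x$i) \<longrightarrow> D \<le> f y"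
    if "finite J" for J
    using that
  proof (induction J rule: finite_induct)
    case empty
    have "\<forall>y. (\<forall>i. y$i = x$i) \<longrightarrow> f x \<le> f y"
      by (metis vec_eq_iff order_refl)
    then show ?case by auto
  next
    case (insert j J)
    then obtain D where D: "\<And>y. \<forall>i\<in>J. \<bar>y$i - x$i\<bar> \<le> s \<Longrightarrow> \<forall>i. i \<notin> J \<longrightarrow> y$i = x$i \<Longrightarrow> D \<le> f y"
      by blast
    have "2 * D - C \<le> f y"
      if y: "\<forall>i\<in>insert j J. \<bar>y$i - x$i\<bar> \<le> s" "\<forall>i. i \<notin> insert j J \<longrightarrow> y$i = x$i" for y
    proof -
      \<comment> \<open>reflect the \<open>j\<close>-th coordinate of \<open>y\<close> through \<open>x$j\<close>\<close>
      define \<psi> where "\<psi> t = f (y - y$j *\<^sub>R axis j 1 + t *\<^sub>R axis j 1)" for t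
      have s: "0 \<le> s" and yj: "\<bar>y$j - x$j\<bar> \<le> s"
        using y(1) by (auto intro: order_trans[OF abs_ge_zero])
      have "\<psi> (x$j) = \<psi> ((1 - 1/2) *\<^sub>R y$j + (1/2) *\<^sub>R (2 * x$j - y$j))"
        by (simp add: field_simps)
      also have "\<dots> \<le> (1 - 1/2) * \<psi> (y$j) + (1/2) * \<psi> (2 * x$j - y$j)"
        unfolding \<psi>_def by (rule convex_onD[OF separately_convexD[OF sc]]) auto
      finally have "2 * \<psi> (x$j) \<le> f y + \<psi> (2 * x$j - y$j)"
        by (simp add: \<psi>_def)
      moreover have "D \<le> \<psi> (x$j)"
        unfolding \<psi>_def using y insert.hyps by (intro D) (auto simp: axis_def)
      moreover have "\<psi> (2 * x$j - y$j) \<le> C"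
        unfolding \<psi>_def using y s yj
        by (intro C) (auto simp: mem_cube axis_def abs_minus_commute split: if_splits)
      ultimately show ?thesis by linarith
    qed
    then show ?case by blast
  qed
  from this[of UNIV] obtain D where "\<And>y. y \<in> cube x s \<Longrightarrow> D \<le> f y"
    by (auto simp: mem_cube)
  then show ?thesis by (rule bdd_belowI2)
qed

lemma separately_convex_axis_step:
  fixes f :: "real^'n \<Rightarrow> real"
  assumes sc: "separately_convex f"
    and bounds: "\<And>y. y \<in> cube x 1 \<Longrightarrow> D \<le> f y \<and> f y \<le> C"
    and y: "y \<in> cube x (1/2)" and yt: "y + t *\<^sub>R axis j 1 \<in> cube x (1/2)"
  shows "\<bar>f (y + t *\<^sub>R axis j 1) - f y\<bar> \<le> 2 * (C - D) * \<bar>t\<bar>"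
proof -
  define \<phi> where "\<phi> \<tau> = f (y + \<tau> *\<^sub>R axis j 1)" for \<tau>
  define a where "a = x$j - y$j - 1/2"
  define b where "b = x$j - y$j + 1/2"
  have in_cube: "y + \<tau> *\<^sub>R axis j 1 \<in> cube x 1" if "\<tau> \<in> {a - 1/2..b + 1/2}" for \<tau>
    unfolding mem_cube
  proof
    fix i
    have "\<bar>y$i - x$i\<bar> \<le> 1/2"
      using y by (simp add: mem_cube)
    then have "- 1/2 \<le> y$i - x$i" "y$i - x$i \<le> 1/2"
      by linarith+
    then show "\<bar>(y + \<tau> *\<^sub>R axis j 1) $ i - x $ i\<bar> \<le> 1"
      using that by (cases "i = j") (auto simp: axis_def a_def b_def abs_le_iff)
  qed
  have "\<bar>\<phi> t - \<phi> 0\<bar> \<le> (C - D) / (1/2) * \<bar>t - 0\<bar>"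
  proof (rule convex_on_Icc_lipschitz_bound)
    show "convex_on {a - 1/2..b + 1/2} \<phi>"
      unfolding \<phi>_def by (rule convex_on_subset[OF separately_convexD[OF sc]]) auto
    show "D \<le> \<phi> \<tau> \<and> \<phi> \<tau> \<le> C" if "\<tau> \<in> {a - 1/2..b + 1/2}" for \<tau>
      unfolding \<phi>_def using bounds[OF in_cube[OF that]] .
    have "\<bar>y$j - x$j\<bar> \<le> 1/2" "\<bar>y$j + t - x$j\<bar> \<le> 1/2"
      using y yt by (auto simp: mem_cube dest: spec[of _ j])
    then show "0 \<in> {a..b}" "t \<in> {a..b}"
      unfolding a_def b_def atLeastAtMost_iff by arith+
  qed simp
  then show ?thesis by (simp add: \<phi>_def algebra_simps)
qed

lemma separately_convex_lipschitz_on_cube: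
  fixes f :: "real^'n \<Rightarrow> real"
  assumes sc: "separately_convex f"
    and bounds: "\<And>y. y \<in> cube x 1 \<Longrightarrow> D \<le> f y \<and> f y \<le> C"
  shows "(2 * (C - D) * CARD('n))-lipschitz_on (cube x (1/2)) f"
proof (rule lipschitz_onI)
  have "D \<le> C"
    using bounds[of x] by (simp add: mem_cube)
  then show "0 \<le> 2 * (C - D) * CARD('n)"
    by simp
  fix y y' assume y: "y \<in> cube x (1/2)" and y': "y' \<in> cube x (1/2)"
  have "\<bar>f (\<chi> i. if i \<in> J then y'$i else y$i) - f y\<bar> \<le> 2 * (C - D) * (\<Sum>i\<in>J. \<bar>y'$i - y$i\<bar>)"
    if "finite J" for J
    using that
  proof (induction J rule: finite_induct)
    case (insert j J)
    define z where "z = (\<chi> i. if i \<in> J then y'$i else y$i)"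
    have z: "z \<in> cube x (1/2)" and zj: "z$j = y$j"
      using y y' insert.hyps by (auto simp: z_def mem_cube)
    have step: "(\<chi> i. if i \<in> insert j J then y'$i else y$i) = z + (y'$j - y$j) *\<^sub>R axis j 1"
      using insert.hyps by (auto simp: vec_eq_iff z_def axis_def)
    have "z + (y'$j - y$j) *\<^sub>R axis j 1 \<in> cube x (1/2)"
      using z y' zj by (auto simp: mem_cube axis_def)
    then have "\<bar>f (z + (y'$j - y$j) *\<^sub>R axis j 1) - f z\<bar> \<le> 2 * (C - D) * \<bar>y'$j - y$j\<bar>"
      using separately_convex_axis_step[OF sc bounds z] by simp
    with insert.IH insert.hyps show ?case
      unfolding step z_def[symmetric] by (simp add: algebra_simps)
  qed (simp add: vec_eq_iff)
  from this[of UNIV]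
  have "\<bar>f y' - f y\<bar> \<le> 2 * (C - D) * (\<Sum>i\<in>UNIV. \<bar>y'$i - y$i\<bar>)"
    by (simp add: vec_eq_iff)
  also have "\<dots> \<le> 2 * (C - D) * (\<Sum>i\<in>(UNIV::'n set). dist y y')"
    using \<open>D \<le> C\<close> component_le_norm_cart[of "y' - y"]
    by (intro mult_left_mono sum_mono) (auto simp: dist_norm norm_minus_commute)
  finally show "dist (f y) (f y') \<le> 2 * (C - D) * CARD('n) * dist y y'"
    by (simp add: dist_real_def abs_minus_commute)
qed

lemma separately_convex_locally_lipschitz:
  fixes f :: "real^'n \<Rightarrow> real"
  assumes sc: "separately_convex f"
  obtains L where "L > 0" and "L-lipschitz_on (cball x (1/2)) f"
proof -
  obtain C D where "\<And>y. y \<in> cube x 1 \<Longrightarrow> D \<le> f y \<and> f y \<le> C"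
    using separately_convex_bdd_above_cube[OF sc, of x 1] separately_convex_bdd_below_cube[OF sc, of x 1]
    by (auto simp: bdd_above_def bdd_below_def)
  then have "(2 * (C - D) * CARD('n))-lipschitz_on (cube x (1/2)) f"
    by (rule separately_convex_lipschitz_on_cube[OF sc])
  moreover have "cball x (1/2) \<subseteq> cube x (1/2)"
  proof
    fix y assume "y \<in> cball x (1/2)"
    then have "\<bar>(y - x)$i\<bar> \<le> 1/2" for i
      using component_le_norm_cart[of "y - x" i] by (simp add: dist_norm norm_minus_commute)
    then show "y \<in> cube x (1/2)"
      by (simp add: mem_cube)
  qed
  ultimately have "(max 1 (2 * (C - D) * CARD('n)))-lipschitz_on (cball x (1/2)) f"
    by (rule lipschitz_on_mono) simp
  then show thesis by (rule that[rotated]) simp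
qed

section \<open>Transporting concave kinks\<close>

definition difference_quotient :: "('a::real_vector \<Rightarrow> real) \<Rightarrow> 'a \<Rightarrow> 'a \<Rightarrow> real \<Rightarrow> real" where
  "difference_quotient f x v t = (f (x + t *\<^sub>R v) - f x) / t"

definition concave_kink ::
  "('a::real_vector \<Rightarrow> real) \<Rightarrow> 'a \<Rightarrow> 'a \<Rightarrow> real \<Rightarrow> real \<Rightarrow> real \<Rightarrow> bool" where
  "concave_kink f p w \<gamma> \<rho>\<^sub>1 \<rho>\<^sub>2 \<longleftrightarrow>
     (\<forall>h\<in>{\<rho>\<^sub>1..\<rho>\<^sub>2}. f (p + h *\<^sub>R w) + f (p - h *\<^sub>R w) - 2 * f p \<le> - 2 * \<gamma> * h)"

lemma concave_kink_mono:
  "concave_kink f p w \<gamma> \<rho>\<^sub>1 \<rho>\<^sub>2 \<Longrightarrow> \<rho>\<^sub>1 \<le> \<rho>\<^sub>1' \<Longrightarrow> \<rho>\<^sub>2' \<le> \<rho>\<^sub>2 \<Longrightarrow> concave_kink f p w \<gamma> \<rho>\<^sub>1' \<rho>\<^sub>2'"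
  by (auto simp: concave_kink_def)

lemma not_concave_kink_zero:
  assumes "\<gamma> > 0" "0 < \<rho>\<^sub>1" "\<rho>\<^sub>1 \<le> \<rho>\<^sub>2"
  shows "\<not> concave_kink f p 0 \<gamma> \<rho>\<^sub>1 \<rho>\<^sub>2"
  using assms unfolding concave_kink_def
  by (auto intro!: bexI[of _ \<rho>\<^sub>1] simp: not_le)

lemma lipschitz_on_cball_increment:
  fixes f :: "'a::real_normed_vector \<Rightarrow> real"
  assumes lip: "M-lipschitz_on U f" and U: "cball p r \<subseteq> U"
    and v: "norm v \<le> h" and q: "dist p q + h \<le> r"
  shows "\<bar>f (q + v) - f q\<bar> \<le> M * h"
proof -
  have "dist p (q + v) \<le> dist p q + dist q (q + v)"
    by (rule dist_triangle)
  then have "dist p (q + v) \<le> r" "dist p q \<le> r"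
    using q v by (simp_all add: dist_norm) (smt (verit) norm_ge_zero)+
  then have "q + v \<in> U" "q \<in> U"
    using U by auto
  then have "\<bar>f (q + v) - f q\<bar> \<le> M * norm v"
    using lipschitz_onD[OF lip, of "q + v" q] by (simp add: dist_norm dist_real_def)
  also have "\<dots> \<le> M * h"
    using v lipschitz_on_nonneg[OF lip] by (rule mult_left_mono)
  finally show ?thesis .
qed

lemma secant_weight_bounds:
  fixes X B c :: real
  assumes X: "X > 0" and B: "B \<ge> 2" and c: "\<bar>c\<bar> \<le> X / 2"
  shows "0 \<le> (X - c) / (B * X - c)" and "(X - c) / (B * X - c) \<le> 2 / B"
proof -
  have "2 * X \<le> B * X"
    using X B by simp
  then have pos: "B * X - c > 0" "X - c \<ge> 0"
    using X c by linarith+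
  then show "0 \<le> (X - c) / (B * X - c)"
    by simp
  have "(B - 2) * (- c) \<le> (B - 2) * (X / 2)"
    using B c by (intro mult_left_mono) auto
  moreover have "0 < B * X"
    using X B by simp
  ultimately have "B * (X - c) \<le> 2 * (B * X - c)"
    using X by (simp add: algebra_simps)
  then show "(X - c) / (B * X - c) \<le> 2 / B"
    using pos B by (simp add: divide_le_eq field_simps)
qed

lemma secant_weights_sum:
  fixes X B c h :: real
  assumes X: "X > 0" and B: "B \<ge> 2" and c: "\<bar>c\<bar> \<le> h" and h: "h \<le> X / 2"
  shows "\<bar>((X - c) / (B * X - c) + (X + c) / (B * X + c)) * (B * X) - 2 * X\<bar> \<le> 2 * h / B"
proof -
  define N where "N = B * X"
  have N: "2 * X \<le> N" "N > 0"
    using X B by (simp_all add: N_def)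
  have c2: "c\<^sup>2 \<le> h * (X / 2)" and c2N: "c\<^sup>2 \<le> N\<^sup>2 / 2"
  proof -
    have "c\<^sup>2 = \<bar>c\<bar> * \<bar>c\<bar>"
      by (simp add: power2_eq_square)
    also have "\<dots> \<le> h * (X / 2)"
      using c h by (intro mult_mono) auto
    finally show "c\<^sup>2 \<le> h * (X / 2)" .
    have "h * (X / 2) \<le> N\<^sup>2 / 2"
      using c h N X by (simp add: power2_eq_square) (smt (verit) mult_mono)
    with \<open>c\<^sup>2 \<le> h * (X / 2)\<close> show "c\<^sup>2 \<le> N\<^sup>2 / 2" by linarith
  qed
  have N2: "N\<^sup>2 > 0"
    using N by simp
  have pos: "N - c > 0" "N + c > 0" "N\<^sup>2 - c\<^sup>2 > 0"
    using c h N c2N N2 unfolding abs_le_iff by linarith+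
  have "((X - c) / (N - c) + (X + c) / (N + c)) * N - 2 * X = - 2 * c\<^sup>2 * (N - X) / (N\<^sup>2 - c\<^sup>2)"
    using pos by (simp add: field_simps power2_eq_square)
  also have "\<bar>\<dots>\<bar> \<le> 2 * (h * (X / 2)) * N / (N\<^sup>2 / 2)"
    unfolding abs_divide abs_mult using pos N X c2 c2N order_trans[OF abs_ge_zero c]
    by (intro frac_le mult_mono) (auto simp: abs_of_pos)
  also have "\<dots> = 2 * h / B"
    using N X by (simp add: N_def field_simps power2_eq_square)
  finally show ?thesis
    by (simp add: N_def)
qed

lemma le_secant_combination:
  fixes N X d g u v :: real
  assumes "(N - d) * g \<le> (N - X) * u + (X - d) * v" and "N - d > 0"
  shows "g \<le> (1 - (X - d) / (N - d)) * u + (X - d) / (N - d) * v"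
proof -
  have "g \<le> ((N - X) * u + (X - d) * v) / (N - d)"
    using assms by (simp add: pos_le_divide_eq mult.commute)
  also have "\<dots> = (N - X) / (N - d) * u + (X - d) / (N - d) * v"
    by (simp add: add_divide_distrib)
  also have "(N - X) / (N - d) = 1 - (X - d) / (N - d)"
    using assms(2) by (simp add: field_simps)
  finally show ?thesis .
qed

text \<open>
  The arithmetic core of the transport step. With \<open>p' = p + X e\<^sub>i\<close> and \<open>q = p + B X e\<^sub>i\<close>:
  \<open>a, b\<close> are the increments of \<open>f\<close> from \<open>p\<close> to \<open>p \<plusminus> h w\<close>, \<open>dp, dm\<close> those from \<open>q\<close> to
  \<open>q \<plusminus> h w'\<close>, \<open>gp, gm\<close> those from \<open>p\<close> to \<open>p' \<plusminus> h w'\<close>, and \<open>s, sX\<close> the slopes of \<open>f\<close> along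
  \<open>e\<^sub>i\<close> from \<open>p\<close> to \<open>q\<close> and to \<open>p'\<close>; \<open>c = h w\<^sub>i\<close>.
\<close>
lemma shifted_kink_estimate:
  fixes X B h c \<gamma> M a b dp dm s sX gp gm :: real
  assumes X: "X > 0" and B: "B \<ge> 2" and BM: "20 * M \<le> B * \<gamma>"
    and c: "\<bar>c\<bar> \<le> h" and h: "h \<le> X / 2"
    and kink: "a + b \<le> - 2 * \<gamma> * h"
    and a: "\<bar>a\<bar> \<le> M * h" and b: "\<bar>b\<bar> \<le> M * h"
    and dp: "\<bar>dp\<bar> \<le> M * h" and dm: "\<bar>dm\<bar> \<le> M * h" and s: "\<bar>s\<bar> \<le> M"
    and slopes: "4 * X * (s - sX) \<le> \<gamma> * h"
    and gp: "(B * X - c) * gp \<le> (B * X - X) * a + (X - c) * (B * X * s + dp)"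
    and gm: "(B * X + c) * gm \<le> (B * X - X) * b + (X + c) * (B * X * s + dm)"
  shows "gp + gm - 2 * X * sX \<le> - \<gamma> * h"
proof -
  define bp where "bp = (X - c) / (B * X - c)"
  define bm where "bm = (X + c) / (B * X + c)"
  have cX: "\<bar>c\<bar> \<le> X / 2" "\<bar>- c\<bar> \<le> X / 2"
    using c h by simp_all
  have bp: "0 \<le> bp" "bp \<le> 2 / B" and bm: "0 \<le> bm" "bm \<le> 2 / B"
    using secant_weight_bounds[OF X B cX(1)] secant_weight_bounds[OF X B cX(2)]
    by (simp_all add: bp_def bm_def)
  have BX: "2 * X \<le> B * X"
    using X B by simp
  have pos: "B * X - c > 0" "B * X + c > 0"
    using cX X BX unfolding abs_le_iff by linarith+
  have gp': "gp \<le> (1 - bp) * a + bp * (B * X * s + dp)"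
    using le_secant_combination[OF gp pos(1)] by (simp add: bp_def)
  have gm': "gm \<le> (1 - bm) * b + bm * (B * X * s + dm)"
    using le_secant_combination[of "B * X" "- c" gm X b "B * X * s + dm"] gm pos(2) by (simp add: bm_def)
  have small: "\<bar>\<beta> * y\<bar> \<le> 2 / B * (M * h)" if "0 \<le> \<beta>" "\<beta> \<le> 2 / B" "\<bar>y\<bar> \<le> M * h" for \<beta> y
    unfolding abs_mult using that B by (intro mult_mono) auto
  have "\<bar>((bp + bm) * (B * X) - 2 * X) * s\<bar> \<le> 2 * h / B * M"
    unfolding abs_mult bp_def bm_def using secant_weights_sum[OF X B c h] s
    by (intro mult_mono) auto
  moreover have "2 * X * (s - sX) \<le> \<gamma> * h / 2"
    using slopes by simp
  moreover have "10 * M * h / B \<le> \<gamma> * h / 2"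
  proof -
    have "(20 * M) * h \<le> (B * \<gamma>) * h"
      using BM order_trans[OF abs_ge_zero c] by (rule mult_right_mono)
    then show ?thesis
      using B by (simp add: field_simps)
  qed
  moreover note small[OF bp a] small[OF bm b] small[OF bp dp] small[OF bm dm]
  moreover have "4 * (2 / B * (M * h)) + 2 * h / B * M = 10 * M * h / B"
    by (simp add: field_simps)
  ultimately have "(a + b) - bp * a - bm * b + bp * dp + bm * dm
      + ((bp + bm) * (B * X) - 2 * X) * s + 2 * X * (s - sX) \<le> -2 * \<gamma> * h + \<gamma> * h"
    using kink unfolding abs_le_iff by linarith
  with gp' gm' show ?thesis
    by (simp add: algebra_simps)
qed

lemma norm_remove_coordinate_le:
  fixes w :: "real^'n"
  shows "norm (w - w$i *\<^sub>R axis i 1) \<le> norm w"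
  by (rule norm_le_componentwise_cart) (auto simp: axis_def)

lemma card_support_remove_coordinate:
  fixes w :: "real^'n"
  assumes "w$i \<noteq> 0"
  shows "card {j. (w - w$i *\<^sub>R axis i 1)$j \<noteq> 0} = card {j. w$j \<noteq> 0} - 1"
proof -
  have "{j. (w - w$i *\<^sub>R axis i 1)$j \<noteq> 0} = {j. w$j \<noteq> 0} - {i}"
    by (auto simp: axis_def)
  then show ?thesis
    using assms by (simp add: card_Diff_singleton)
qed

lemma separately_convex_shift_bound:
  fixes f :: "real^'n \<Rightarrow> real" and i :: 'n
  defines "e \<equiv> axis i 1"
  assumes sc: "separately_convex f"
    and "h * w$i < N" "h * w$i \<le> X" "X \<le> N"
  shows "(N - h * w$i) * (f (p + X *\<^sub>R e + h *\<^sub>R (w - w$i *\<^sub>R e)) - f p)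
           \<le> (N - X) * (f (p + h *\<^sub>R w) - f p) + (X - h * w$i) * (f (p + N *\<^sub>R e + h *\<^sub>R (w - w$i *\<^sub>R e)) - f p)"
proof -
  define z where "z = p + h *\<^sub>R (w - w$i *\<^sub>R e)"
  have "(N - h * w$i) * f (z + X *\<^sub>R e) \<le> (N - X) * f (z + (h * w$i) *\<^sub>R e) + (X - h * w$i) * f (z + N *\<^sub>R e)"
    using convex_on_three_points[OF convex_on_subset[OF separately_convexD[OF sc, of z i]], of "h * w$i" N X]
      assms(3-5) by (simp add: e_def)
  moreover have "z + (h * w$i) *\<^sub>R e = p + h *\<^sub>R w"
    by (simp add: z_def algebra_simps)
  ultimately show ?thesis
    by (simp add: z_def algebra_simps)
qed

text \<open>
  Convexity on the lines through \<open>p \<plusminus> h w'\<close> parallel to \<open>e\<^sub>i\<close> bounds \<open>f (p' \<plusminus> h w')\<close> by the values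
  at \<open>p \<plusminus> h w\<close> and \<open>q \<plusminus> h w'\<close>; the kink at \<open>p\<close> survives at half strength as long as the slope
  of \<open>f\<close> along \<open>e\<^sub>i\<close> grows little between the scales \<open>X\<close> and \<open>B X\<close>.
\<close>
lemma concave_kink_shift:
  fixes f :: "real^'n \<Rightarrow> real" and i :: 'n
  defines "e \<equiv> axis i 1"
  assumes sc: "separately_convex f" and lip: "M-lipschitz_on U f"
    and U: "cball p (2 * \<rho>\<^sub>2) \<subseteq> U" and w: "norm w \<le> 1"
    and kink: "concave_kink f p w \<gamma> \<rho>\<^sub>1 \<rho>\<^sub>2" and \<rho>: "0 \<le> \<rho>\<^sub>1" "\<rho>\<^sub>1 \<le> \<rho>"
    and X: "X > 0" and B: "B \<ge> 2" "B * X \<le> \<rho>\<^sub>2" and \<gamma>: "\<gamma> > 0" and BM: "20 * M \<le> B * \<gamma>"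
    and slopes: "4 * X * (difference_quotient f p e (B * X) - difference_quotient f p e X) \<le> \<gamma> * \<rho>"
  shows "concave_kink f (p + X *\<^sub>R e) (w - w$i *\<^sub>R e) (\<gamma> / 2) \<rho> (X / 2)"
  unfolding concave_kink_def
proof
  fix h assume h: "h \<in> {\<rho>..X / 2}"
  define w' where "w' = w - w$i *\<^sub>R e"
  define c where "c = h * w$i"
  define N where "N = B * X"
  have h0: "0 \<le> h" and hX: "h \<le> X / 2"
    using h \<rho> by auto
  have XN: "2 * X \<le> N" "N \<le> \<rho>\<^sub>2"
    using X B by (simp_all add: N_def)
  have "\<bar>w$i\<bar> \<le> 1"
    using component_le_norm_cart[of w i] w by simp
  then have c: "\<bar>c\<bar> \<le> h"
    unfolding c_def abs_mult using h0 by (simp add: mult_left_le)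
  have c_range: "c < N" "- c < N" "c \<le> X" "- c \<le> X"
    using c hX XN X by (auto simp: abs_le_iff)
  have "norm w' \<le> 1"
    using norm_remove_coordinate_le[of w i] w by (simp add: w'_def e_def)
  then have norm_hw: "norm (h *\<^sub>R w) \<le> h" "norm (h *\<^sub>R w') \<le> h"
    using w h0 by (auto simp: mult_left_le)
  have bound: "\<bar>f (q + v) - f q\<bar> \<le> M * h" "\<bar>f (q - v) - f q\<bar> \<le> M * h"
    if "dist p q \<le> N" "norm v \<le> h" for q v
    using lipschitz_on_cball_increment[OF lip U, of v h q] lipschitz_on_cball_increment[OF lip U, of "- v" h q]
      that hX X XN by auto
  have dist_pq: "dist p p \<le> N" "dist p (p + N *\<^sub>R e) \<le> N"
    using XN X by (simp_all add: e_def dist_norm)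
  have "\<bar>f (p + N *\<^sub>R e) - f p\<bar> \<le> M * N"
    using lipschitz_on_cball_increment[OF lip U, of "N *\<^sub>R e" N p] XN X by (simp add: e_def)
  then have slope_N: "\<bar>difference_quotient f p e N\<bar> \<le> M"
    using XN X by (simp add: difference_quotient_def abs_div divide_le_eq)
  have slopes': "4 * X * (difference_quotient f p e (B * X) - difference_quotient f p e X) \<le> \<gamma> * h"
  proof -
    have "\<gamma> * \<rho> \<le> \<gamma> * h"
      using h \<gamma> by (intro mult_left_mono) auto
    then show ?thesis
      using slopes by linarith
  qed
  have kink_h: "f (p + h *\<^sub>R w) - f p + (f (p - h *\<^sub>R w) - f p) \<le> - 2 * \<gamma> * h"
    using kink h \<rho> hX XN X by (auto simp: concave_kink_def)
  have plus: "(B * X - c) * (f (p + X *\<^sub>R e + h *\<^sub>R w') - f p) \<le> (B * X - X) * (f (p + h *\<^sub>R w) - f p)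
      + (X - c) * (B * X * difference_quotient f p e N + (f (p + N *\<^sub>R e + h *\<^sub>R w') - f (p + N *\<^sub>R e)))"
    using separately_convex_shift_bound[OF sc, where i=i and h=h and w=w and N=N and X=X and p=p] c_range XN X
    by (auto simp: N_def c_def w'_def e_def difference_quotient_def)
  have minus: "(B * X + c) * (f (p + X *\<^sub>R e - h *\<^sub>R w') - f p) \<le> (B * X - X) * (f (p - h *\<^sub>R w) - f p)
      + (X + c) * (B * X * difference_quotient f p e N + (f (p + N *\<^sub>R e - h *\<^sub>R w') - f (p + N *\<^sub>R e)))"
  proof -
    have "- w - (- w)$i *\<^sub>R axis i 1 = - w'"
      by (simp add: w'_def e_def)
    then show ?thesis
      using separately_convex_shift_bound[OF sc, where i=i and h=h and w="- w" and N=N and X=X and p=p]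
        c_range XN X
      by (auto simp: N_def c_def e_def difference_quotient_def)
  qed
  have "f (p + X *\<^sub>R e + h *\<^sub>R w') - f p + (f (p + X *\<^sub>R e - h *\<^sub>R w') - f p)
      - 2 * X * difference_quotient f p e X \<le> - \<gamma> * h"
    using shifted_kink_estimate[OF X B(1) BM c hX kink_h
        bound(1)[OF dist_pq(1) norm_hw(1)] bound(2)[OF dist_pq(1) norm_hw(1)]
        bound(1)[OF dist_pq(2) norm_hw(2), unfolded N_def]
        bound(2)[OF dist_pq(2) norm_hw(2), unfolded N_def]
        slope_N[unfolded N_def] slopes' plus[unfolded N_def] minus[unfolded N_def]] .
  then show "f (p + X *\<^sub>R e + h *\<^sub>R w') + f (p + X *\<^sub>R e - h *\<^sub>R w') - 2 * f (p + X *\<^sub>R e) \<le> - 2 * (\<gamma> / 2) * h"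
    using X by (simp add: difference_quotient_def)
qed

lemma telescoping_small_increment:
  fixes a :: "nat \<Rightarrow> real"
  assumes n: "n > 0" and total: "a n - a 0 \<le> c"
  shows "\<exists>j<n. a (Suc j) - a j \<le> c / n"
proof (rule ccontr)
  assume "\<not> ?thesis"
  then have "(\<Sum>j<n. c / n) < (\<Sum>j<n. a (Suc j) - a j)"
    using n by (intro sum_strict_mono) auto
  also have "\<dots> = a n - a 0"
    by (rule sum_lessThan_telescope)
  finally show False
    using n total by simp
qed

lemma concave_kink_shift_to_some_scale:
  fixes f :: "real^'n \<Rightarrow> real" and B \<gamma> :: real and K :: nat
  assumes sc: "separately_convex f" and lip: "M-lipschitz_on U f" and M: "M > 0" and \<gamma>: "\<gamma> > 0"
    and B: "B \<ge> 2" "20 * M \<le> B * \<gamma>" and K: "K > 0"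
    and w: "norm w \<le> 1" and \<rho>\<^sub>1: "0 < \<rho>\<^sub>1" and \<rho>\<^sub>2: "K * \<gamma> * B ^ K / (8 * M) * \<rho>\<^sub>1 \<le> \<rho>\<^sub>2"
    and U: "cball p (2 * \<rho>\<^sub>2) \<subseteq> U" and kink: "concave_kink f p w \<gamma> \<rho>\<^sub>1 \<rho>\<^sub>2"
  shows "\<exists>X. 0 < X \<and> X \<le> \<rho>\<^sub>2 \<and>
           concave_kink f (p + X *\<^sub>R axis i 1) (w - w$i *\<^sub>R axis i 1) (\<gamma> / 2) (8 * M * X / (K * \<gamma>)) (X / 2)"
proof -
  \<comment> \<open>the axis slope at \<open>p\<close> is bounded by \<open>M\<close>, so over \<open>K\<close> consecutive geometric scales
    it grows by at most \<open>2M/K\<close> on one of them\<close>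
  define X where "X j = \<rho>\<^sub>1 * K * \<gamma> / (8 * M) * B ^ j" for j
  define \<sigma> where "\<sigma> = difference_quotient f p (axis i 1)"
  have X_pos: "X j > 0" for j
    using \<rho>\<^sub>1 K \<gamma> M B by (simp add: X_def)
  have X_le: "X j \<le> \<rho>\<^sub>2" if "j \<le> K" for j
  proof -
    have "B ^ j \<le> B ^ K"
      using that B by (intro power_increasing) auto
    then have "X j \<le> X K"
      unfolding X_def using \<rho>\<^sub>1 K \<gamma> M by (intro mult_left_mono) auto
    also have "\<dots> = K * \<gamma> * B ^ K / (8 * M) * \<rho>\<^sub>1"
      by (simp add: X_def field_simps)
    finally show ?thesis
      using \<rho>\<^sub>2 by linarith
  qed
  have slope_bound: "\<bar>\<sigma> (X j)\<bar> \<le> M" if "j \<le> K" for j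
  proof -
    have "\<bar>f (p + X j *\<^sub>R axis i 1) - f p\<bar> \<le> M * X j"
      using lipschitz_on_cball_increment[OF lip U, of "X j *\<^sub>R axis i 1" "X j" p] X_pos[of j] X_le[OF that]
      by simp
    then show ?thesis
      using X_pos[of j] by (simp add: \<sigma>_def difference_quotient_def abs_div divide_le_eq)
  qed
  have "\<sigma> (X K) - \<sigma> (X 0) \<le> 2 * M"
    using slope_bound[of K] slope_bound[of 0] unfolding abs_le_iff by simp
  then obtain j where j: "j < K" and small: "\<sigma> (X (Suc j)) - \<sigma> (X j) \<le> 2 * M / K"
    using telescoping_small_increment[of K "\<lambda>j. \<sigma> (X j)"] K by auto
  have XB: "X (Suc j) = B * X j"
    by (simp add: X_def)
  have "concave_kink f (p + X j *\<^sub>R axis i 1) (w - w$i *\<^sub>R axis i 1) (\<gamma> / 2) (8 * M * X j / (K * \<gamma>)) (X j / 2)"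
  proof (rule concave_kink_shift[OF sc lip U w kink])
    have "8 * M * X j / (K * \<gamma>) = \<rho>\<^sub>1 * B ^ j"
      using K \<gamma> M by (simp add: X_def field_simps)
    then show "\<rho>\<^sub>1 \<le> 8 * M * X j / (K * \<gamma>)"
      using \<rho>\<^sub>1 B by (simp add: one_le_power)
    show "B * X j \<le> \<rho>\<^sub>2"
      using X_le[of "Suc j"] j XB by simp
    have "4 * X j * (\<sigma> (X (Suc j)) - \<sigma> (X j)) \<le> 4 * X j * (2 * M / K)"
      using small X_pos[of j] by (intro mult_left_mono) auto
    also have "\<dots> = \<gamma> * (8 * M * X j / (K * \<gamma>))"
      using K \<gamma> by (simp add: field_simps)
    finally show "4 * X j * (difference_quotient f p (axis i 1) (B * X j) - difference_quotient f p (axis i 1) (X j))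
        \<le> \<gamma> * (8 * M * X j / (K * \<gamma>))"
      by (simp add: \<sigma>_def XB)
  qed (use \<rho>\<^sub>1 B X_pos \<gamma> in auto)
  then show ?thesis
    using X_pos[of j] X_le[of j] j by auto
qed

lemma concave_kink_reduce:
  fixes f :: "real^'n \<Rightarrow> real"
  assumes sc: "separately_convex f" and lip: "M-lipschitz_on U f" and M: "M > 0" and \<gamma>: "\<gamma> > 0"
  shows "\<exists>R\<ge>1. \<forall>p w \<rho>\<^sub>1 \<rho>\<^sub>2 i. norm w \<le> 1 \<longrightarrow> 0 < \<rho>\<^sub>1 \<longrightarrow> R * \<rho>\<^sub>1 \<le> \<rho>\<^sub>2 \<longrightarrow>
           cball p (2 * \<rho>\<^sub>2) \<subseteq> U \<longrightarrow> concave_kink f p w \<gamma> \<rho>\<^sub>1 \<rho>\<^sub>2 \<longrightarrow>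
           (\<exists>p' \<rho>\<^sub>1' \<rho>\<^sub>2'. 0 < \<rho>\<^sub>1' \<and> R' * \<rho>\<^sub>1' \<le> \<rho>\<^sub>2' \<and> cball p' (2 * \<rho>\<^sub>2') \<subseteq> U \<and>
              concave_kink f p' (w - w$i *\<^sub>R axis i 1) (\<gamma> / 2) \<rho>\<^sub>1' \<rho>\<^sub>2')"
proof -
  define B where "B = 20 * M / \<gamma> + 2"
  define K where "K = nat \<lceil>16 * M * R' / \<gamma>\<rceil> + 1"
  define R where "R = max 1 (K * \<gamma> * B ^ K / (8 * M))"
  have B: "B \<ge> 2" "20 * M \<le> B * \<gamma>"
    using M \<gamma> by (simp_all add: B_def field_simps)
  have K: "K > 0" "16 * M * R' \<le> K * \<gamma>"
  proof -
    have "16 * M * R' / \<gamma> \<le> K"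
      unfolding K_def by linarith
    then show "K > 0" "16 * M * R' \<le> K * \<gamma>"
      using \<gamma> by (simp_all add: K_def field_simps)
  qed
  have "\<exists>p' \<rho>\<^sub>1' \<rho>\<^sub>2'. 0 < \<rho>\<^sub>1' \<and> R' * \<rho>\<^sub>1' \<le> \<rho>\<^sub>2' \<and> cball p' (2 * \<rho>\<^sub>2') \<subseteq> U \<and>
      concave_kink f p' (w - w$i *\<^sub>R axis i 1) (\<gamma> / 2) \<rho>\<^sub>1' \<rho>\<^sub>2'"
    if w: "norm w \<le> 1" and \<rho>\<^sub>1: "0 < \<rho>\<^sub>1" and \<rho>\<^sub>2: "R * \<rho>\<^sub>1 \<le> \<rho>\<^sub>2"
      and U: "cball p (2 * \<rho>\<^sub>2) \<subseteq> U" and kink: "concave_kink f p w \<gamma> \<rho>\<^sub>1 \<rho>\<^sub>2" for p w \<rho>\<^sub>1 \<rho>\<^sub>2 i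
  proof -
    have "K * \<gamma> * B ^ K / (8 * M) * \<rho>\<^sub>1 \<le> \<rho>\<^sub>2"
      using \<rho>\<^sub>1 \<rho>\<^sub>2 mult_right_mono[of _ R \<rho>\<^sub>1] by (smt (verit) R_def max.cobounded2)
    then obtain X where X: "0 < X" "X \<le> \<rho>\<^sub>2"
      and kink': "concave_kink f (p + X *\<^sub>R axis i 1) (w - w$i *\<^sub>R axis i 1) (\<gamma> / 2) (8 * M * X / (K * \<gamma>)) (X / 2)"
      using concave_kink_shift_to_some_scale[OF sc lip M \<gamma> B K(1) w \<rho>\<^sub>1 _ U kink] by blast
    have "R' * (8 * M * X / (K * \<gamma>)) = (16 * M * R') * X / (2 * (K * \<gamma>))"
      by (simp add: field_simps)
    also have "\<dots> \<le> (K * \<gamma>) * X / (2 * (K * \<gamma>))"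
      using K X \<gamma> by (intro divide_right_mono mult_right_mono) auto
    also have "\<dots> = X / 2"
      using K \<gamma> by simp
    finally have "R' * (8 * M * X / (K * \<gamma>)) \<le> X / 2" .
    moreover have "cball (p + X *\<^sub>R axis i 1) (2 * (X / 2)) \<subseteq> U"
    proof
      fix y assume "y \<in> cball (p + X *\<^sub>R axis i 1) (2 * (X / 2))"
      then have "dist p y \<le> 2 * \<rho>\<^sub>2"
        using dist_triangle[of p y "p + X *\<^sub>R axis i 1"] X by (simp add: dist_norm)
      then show "y \<in> U"
        using U by auto
    qed
    moreover have "0 < 8 * M * X / (K * \<gamma>)"
      using M X K \<gamma> by simp
    ultimately show ?thesis
      using kink' by blast
  qed
  moreover have "R \<ge> 1"
    by (simp add: R_def)
  ultimately show ?thesis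
    by blast
qed

lemma no_concave_kink:
  fixes f :: "real^'n \<Rightarrow> real"
  assumes sc: "separately_convex f" and lip: "M-lipschitz_on U f" and M: "M > 0" and \<gamma>: "\<gamma> > 0"
  shows "\<exists>R\<ge>1. \<forall>p w \<rho>\<^sub>1 \<rho>\<^sub>2. card {i. w$i \<noteq> 0} \<le> k \<longrightarrow> norm w \<le> 1 \<longrightarrow> 0 < \<rho>\<^sub>1 \<longrightarrow>
           R * \<rho>\<^sub>1 \<le> \<rho>\<^sub>2 \<longrightarrow> cball p (2 * \<rho>\<^sub>2) \<subseteq> U \<longrightarrow> \<not> concave_kink f p w \<gamma> \<rho>\<^sub>1 \<rho>\<^sub>2"
  using \<gamma>
proof (induction k arbitrary: \<gamma>)
  case 0
  have "\<not> concave_kink f p w \<gamma> \<rho>\<^sub>1 \<rho>\<^sub>2"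
    if "card {i. w$i \<noteq> 0} \<le> 0" "0 < \<rho>\<^sub>1" "1 * \<rho>\<^sub>1 \<le> \<rho>\<^sub>2" for p w \<rho>\<^sub>1 \<rho>\<^sub>2
  proof -
    have "w = 0"
      using that(1) by (auto simp: vec_eq_iff)
    then show ?thesis
      using not_concave_kink_zero[OF "0.prems"] that by simp
  qed
  then show ?case
    by (intro exI[of _ 1]) auto
next
  case (Suc k)
  obtain R' where R': "\<forall>p w \<rho>\<^sub>1 \<rho>\<^sub>2. card {i. w$i \<noteq> 0} \<le> k \<longrightarrow> norm w \<le> 1 \<longrightarrow> 0 < \<rho>\<^sub>1 \<longrightarrow>
      R' * \<rho>\<^sub>1 \<le> \<rho>\<^sub>2 \<longrightarrow> cball p (2 * \<rho>\<^sub>2) \<subseteq> U \<longrightarrow> \<not> concave_kink f p w (\<gamma> / 2) \<rho>\<^sub>1 \<rho>\<^sub>2"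
    using Suc.IH[of "\<gamma> / 2"] Suc.prems by auto
  obtain R where R: "R \<ge> 1" and reduce: "\<And>p w \<rho>\<^sub>1 \<rho>\<^sub>2 i. norm w \<le> 1 \<Longrightarrow> 0 < \<rho>\<^sub>1 \<Longrightarrow> R * \<rho>\<^sub>1 \<le> \<rho>\<^sub>2 \<Longrightarrow>
      cball p (2 * \<rho>\<^sub>2) \<subseteq> U \<Longrightarrow> concave_kink f p w \<gamma> \<rho>\<^sub>1 \<rho>\<^sub>2 \<Longrightarrow>
      \<exists>p' \<rho>\<^sub>1' \<rho>\<^sub>2'. 0 < \<rho>\<^sub>1' \<and> R' * \<rho>\<^sub>1' \<le> \<rho>\<^sub>2' \<and> cball p' (2 * \<rho>\<^sub>2') \<subseteq> U \<and>
        concave_kink f p' (w - w$i *\<^sub>R axis i 1) (\<gamma> / 2) \<rho>\<^sub>1' \<rho>\<^sub>2'"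
    using concave_kink_reduce[OF sc lip M Suc.prems, of R'] by blast
  have "\<not> concave_kink f p w \<gamma> \<rho>\<^sub>1 \<rho>\<^sub>2"
    if w: "card {i. w$i \<noteq> 0} \<le> Suc k" "norm w \<le> 1" and \<rho>: "0 < \<rho>\<^sub>1" "R * \<rho>\<^sub>1 \<le> \<rho>\<^sub>2"
      and U: "cball p (2 * \<rho>\<^sub>2) \<subseteq> U" for p w \<rho>\<^sub>1 \<rho>\<^sub>2
  proof
    assume kink: "concave_kink f p w \<gamma> \<rho>\<^sub>1 \<rho>\<^sub>2"
    have "\<rho>\<^sub>1 \<le> \<rho>\<^sub>2"
      using \<rho> R mult_right_mono[of 1 R \<rho>\<^sub>1] by linarith
    then have "w \<noteq> 0"
      using not_concave_kink_zero[OF Suc.prems \<rho>(1)] kink by blast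
    then obtain i where i: "w$i \<noteq> 0"
      by (auto simp: vec_eq_iff)
    obtain p' \<rho>\<^sub>1' \<rho>\<^sub>2' where "0 < \<rho>\<^sub>1'" "R' * \<rho>\<^sub>1' \<le> \<rho>\<^sub>2'" "cball p' (2 * \<rho>\<^sub>2') \<subseteq> U"
      and "concave_kink f p' (w - w$i *\<^sub>R axis i 1) (\<gamma> / 2) \<rho>\<^sub>1' \<rho>\<^sub>2'"
      using reduce[OF w(2) \<rho> U kink] by blast
    moreover have "card {j. (w - w$i *\<^sub>R axis i 1)$j \<noteq> 0} \<le> k"
      using card_support_remove_coordinate[OF i] w(1) by simp
    moreover have "norm (w - w$i *\<^sub>R axis i 1) \<le> 1"
      using norm_remove_coordinate_le[of w i] w(2) by simp
    ultimately show False
      using R' by blast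
  qed
  then show ?case
    using R by blast
qed

section \<open>The directional derivative inequality\<close>

lemma concave_kink_if_upper_dir_deriv_less:
  fixes f :: "real^'n \<Rightarrow> real"
  assumes "upper_dir_deriv f x v < - upper_dir_deriv f x (- v)"
  obtains \<gamma> \<delta> where "\<gamma> > 0" "\<delta> > 0" "concave_kink f x v \<gamma> 0 \<delta>"
proof -
  obtain r where r: "upper_dir_deriv f x v < ereal r" "ereal r < - upper_dir_deriv f x (- v)"
    using ereal_dense2[OF assms] by blast
  then have "upper_dir_deriv f x (- v) < - ereal r"
    using ereal_less_uminus_reorder by blast
  then obtain b where b: "upper_dir_deriv f x (- v) < ereal b" "ereal b < - ereal r"
    using ereal_dense2 by blast
  have "\<forall>\<^sub>F t in at_right 0. (f (x + t *\<^sub>R v) - f x) / t < r \<and> (f (x - t *\<^sub>R v) - f x) / t < b"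
    using eventually_conj[OF Limsup_lessD[OF r(1)[unfolded upper_dir_deriv_def]]
        Limsup_lessD[OF b(1)[unfolded upper_dir_deriv_def]]] by simp
  then obtain \<delta> where \<delta>: "\<delta> > 0"
    and quot: "\<And>t. 0 < t \<Longrightarrow> t < \<delta> \<Longrightarrow> (f (x + t *\<^sub>R v) - f x) / t < r \<and> (f (x - t *\<^sub>R v) - f x) / t < b"
    unfolding eventually_at_right_field by auto
  have "concave_kink f x v (- (b + r) / 2) 0 (\<delta> / 2)"
    unfolding concave_kink_def
  proof
    fix t assume t: "t \<in> {0..\<delta> / 2}"
    show "f (x + t *\<^sub>R v) + f (x - t *\<^sub>R v) - 2 * f x \<le> - 2 * (- (b + r) / 2) * t"
    proof (cases "t = 0")
      case False
      then have "f (x + t *\<^sub>R v) - f x < r * t" "f (x - t *\<^sub>R v) - f x < b * t"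
        using quot[of t] t \<delta> by (simp_all add: divide_less_eq)
      then show ?thesis
        by (simp add: algebra_simps)
    qed simp
  qed
  then show thesis
    using that[of "- (b + r) / 2" "\<delta> / 2"] b(2) \<delta> by simp
qed

theorem proposition3p1:
  fixes f :: "real^'n \<Rightarrow> real" and x v :: "real^'n"
  assumes "separately_convex f"
    and "norm v = 1"
  shows "upper_dir_deriv f x v \<ge> - upper_dir_deriv f x (- v)"
proof (rule ccontr)
  assume "\<not> ?thesis"
  then obtain \<gamma> \<delta> where \<gamma>: "\<gamma> > 0" and \<delta>: "\<delta> > 0" and kink: "concave_kink f x v \<gamma> 0 \<delta>"
    by (auto simp: not_le elim: concave_kink_if_upper_dir_deriv_less)
  obtain L where L: "L > 0" "L-lipschitz_on (cball x (1/2)) f"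
    using separately_convex_locally_lipschitz[OF assms(1)] .
  obtain R where R: "R \<ge> 1" and no_kink: "\<forall>p w \<rho>\<^sub>1 \<rho>\<^sub>2. card {i. w$i \<noteq> 0} \<le> CARD('n) \<longrightarrow> norm w \<le> 1 \<longrightarrow>
      0 < \<rho>\<^sub>1 \<longrightarrow> R * \<rho>\<^sub>1 \<le> \<rho>\<^sub>2 \<longrightarrow> cball p (2 * \<rho>\<^sub>2) \<subseteq> cball x (1/2) \<longrightarrow> \<not> concave_kink f p w \<gamma> \<rho>\<^sub>1 \<rho>\<^sub>2"
    using no_concave_kink[OF assms(1) L(2) L(1) \<gamma>] by blast
  define \<rho> where "\<rho> = min \<delta> (1/4)"
  have "card {i. v$i \<noteq> 0} \<le> CARD('n)"
    by (rule card_mono) auto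
  moreover have "concave_kink f x v \<gamma> (\<rho> / R) \<rho>"
    using R \<delta> by (intro concave_kink_mono[OF kink]) (auto simp: \<rho>_def)
  moreover have "0 < \<rho> / R" "R * (\<rho> / R) \<le> \<rho>" "cball x (2 * \<rho>) \<subseteq> cball x (1/2)"
    using R \<delta> by (auto simp: \<rho>_def)
  ultimately show False
    using no_kink assms(2) by auto
qed

end
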